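(* Let $t_0\in\mathbb{R}$, $q_0\ge0$, $\mu>0$, $\alpha>0$, let $X:[t_0,+\infty)\to[0,+\infty)$ be continuous, and let $q$ solve $$q'(t)=X(t)-\Big[\mu+e^{-\alpha q(t)}\big(\min\{\mu,X(t)\}-\mu\big)\Big],\qquad q(t_0)=q_0.$$ Suppose there exist $t_X>t_0$ and $X_\infty<\mu$ with $X(t)\le X_\infty$ for all $t\ge t_X$, and let $q_X=q(t_X)>0$. For $0<\epsilon\le q_X$ define the emptying time $T_\epsilon(q_X)=\inf\{t\ge t_X: q(t)\le\epsilon\}$. Then $$T_\epsilon(q_X)\le t_X+\frac{q_X-\epsilon}{\mu-X_\infty}+\frac{1}{\alpha(\mu-X_\infty)}\log\!\Big(\frac{q_X}{\epsilon}\Big).$$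
   Context: This ODE is the logistic queue model: $q$ is the queue size, $X$ the inflow, $\mu>0$ the maximum outflow rate and $\alpha>0$ a fixed model parameter. *)

theory Defs
  imports "HOL-Analysis.Analysis"
begin

definition emptying_time :: "(real \<Rightarrow> real) \<Rightarrow> real \<Rightarrow> real \<Rightarrow> real" where
  "emptying_time q tX \<epsilon> = Inf {t. t \<ge> tX \<and> q t \<le> \<epsilon>}"

end

theory Submission
  imports Defs
begin

text \<open>
  After t_X the queue satisfies q' = (X - \<mu>) (1 - exp (-\<alpha> q)) \<le> -c (1 - exp (-\<alpha> q)) with
  c = \<mu> - X_\<infinity> > 0. Since d/dq ln (exp (\<alpha> q) - 1) = \<alpha> / (1 - exp (-\<alpha> q)), the Lyapunov
  function ln (exp (\<alpha> q(t)) - 1) + \<alpha> c t is nonincreasing while the queue is nonempty, so q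
  falls from q_X to \<epsilon> within time ln ((exp (\<alpha> q_X) - 1) / (exp (\<alpha> \<epsilon>) - 1)) / (\<alpha> c).
  The stated bound dominates this time because (1 - exp (-x)) / x is decreasing.
\<close>

lemma one_minus_exp_neg_ratio_le:
  fixes a b :: real
  assumes "0 < a" "a \<le> b"
  shows "a * (1 - exp (- b)) \<le> b * (1 - exp (- a))"
proof -
  have b: "b > 0" using assms by simp
  define t where "t = a / b"
  have t: "0 \<le> t" "t \<le> 1" "t * b = a" using assms b by (auto simp: t_def)
  have "exp ((1 - t) *\<^sub>R 0 + t *\<^sub>R (- b)) \<le> (1 - t) * exp 0 + t * exp (- b)"
    using convex_onD[OF exp_convex, of t 0 "-b"] t by simp
  hence "exp (- a) \<le> (1 - t) + t * exp (- b)" using t by simp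
  hence "b * exp (- a) \<le> b * ((1 - t) + t * exp (- b))" using b by simp
  also have "\<dots> = b - a + a * exp (- b)" using t by (simp add: algebra_simps)
  finally show ?thesis by (simp add: algebra_simps)
qed

lemma ln_exp_minus_one_diff_le:
  fixes \<alpha> \<epsilon> x :: real
  assumes "\<alpha> > 0" "0 < \<epsilon>" "\<epsilon> \<le> x"
  shows "ln (exp (\<alpha> * x) - 1) - ln (exp (\<alpha> * \<epsilon>) - 1) \<le> \<alpha> * (x - \<epsilon>) + ln (x / \<epsilon>)"
proof -
  have x: "x > 0" using assms by simp
  have "\<epsilon> * (1 - exp (- (\<alpha> * x))) \<le> x * (1 - exp (- (\<alpha> * \<epsilon>)))"
    using one_minus_exp_neg_ratio_le[of "\<alpha> * \<epsilon>" "\<alpha> * x"] assms by (simp add: mult.assoc)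
  hence "\<epsilon> * (exp (\<alpha> * x) - 1) \<le> x * (exp (\<alpha> * \<epsilon>) - 1) * exp (\<alpha> * (x - \<epsilon>))"
    using mult_left_mono[of _ _ "exp (\<alpha> * x)"]
    by (simp add: algebra_simps exp_minus exp_diff field_simps)
  hence "(exp (\<alpha> * x) - 1) / (exp (\<alpha> * \<epsilon>) - 1) \<le> exp (\<alpha> * (x - \<epsilon>)) * (x / \<epsilon>)"
    using assms by (simp add: field_simps)
  hence "ln ((exp (\<alpha> * x) - 1) / (exp (\<alpha> * \<epsilon>) - 1)) \<le> ln (exp (\<alpha> * (x - \<epsilon>)) * (x / \<epsilon>))"
    using assms x by (subst ln_le_cancel_iff) auto
  thus ?thesis using assms x by (simp add: ln_div ln_mult)
qed

lemma queue_lyapunov_antimono: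
  fixes q q' :: "real \<Rightarrow> real" and \<alpha> c a b :: real
  assumes "\<alpha> > 0" "a \<le> b"
    and deriv: "\<And>s. a \<le> s \<Longrightarrow> s \<le> b \<Longrightarrow> (q has_real_derivative q' s) (at s)"
    and pos: "\<And>s. a \<le> s \<Longrightarrow> s \<le> b \<Longrightarrow> q s > 0"
    and decay: "\<And>s. a \<le> s \<Longrightarrow> s \<le> b \<Longrightarrow> q' s \<le> - c * (1 - exp (- \<alpha> * q s))"
  shows "ln (exp (\<alpha> * q b) - 1) + \<alpha> * c * b \<le> ln (exp (\<alpha> * q a) - 1) + \<alpha> * c * a"
proof (rule DERIV_nonpos_imp_nonincreasing[OF \<open>a \<le> b\<close>])
  fix s assume s: "a \<le> s" "s \<le> b"
  define E where "E = exp (\<alpha> * q s)"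
  have E: "E - 1 > 0" using pos[OF s] assms(1) by (simp add: E_def)
  have "((\<lambda>t. ln (exp (\<alpha> * q t) - 1) + \<alpha> * c * t) has_real_derivative
          \<alpha> * E * q' s / (E - 1) + \<alpha> * c) (at s)"
    unfolding E_def by (rule derivative_eq_intros deriv[OF s] | use E in \<open>simp add: E_def\<close>)+
  moreover have "\<alpha> * E * q' s / (E - 1) + \<alpha> * c \<le> 0"
  proof -
    have "E * (1 - exp (- \<alpha> * q s)) = E - 1" by (simp add: E_def algebra_simps exp_minus)
    hence "E * q' s \<le> - c * (E - 1)"
      using mult_left_mono[OF decay[OF s], of E] by (simp add: E_def algebra_simps)
    hence "E * q' s / (E - 1) \<le> - c" using E by (simp add: divide_le_eq)
    thus ?thesis using assms(1) mult_left_mono[of "E * q' s / (E - 1)" "- c" \<alpha>]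
      by (simp add: algebra_simps)
  qed
  ultimately show "\<exists>y. ((\<lambda>t. ln (exp (\<alpha> * q t) - 1) + \<alpha> * c * t) has_real_derivative y) (at s)
                     \<and> y \<le> 0" by blast
qed

lemma queue_reaches_level:
  fixes q q' :: "real \<Rightarrow> real" and \<alpha> c a \<epsilon> :: real
  assumes "\<alpha> > 0" "c > 0" "0 < \<epsilon>" "\<epsilon> \<le> q a"
    and deriv: "\<And>s. a \<le> s \<Longrightarrow> (q has_real_derivative q' s) (at s)"
    and decay: "\<And>s. a \<le> s \<Longrightarrow> q s > 0 \<Longrightarrow> q' s \<le> - c * (1 - exp (- \<alpha> * q s))"
  shows "\<exists>s. a \<le> s \<and> s \<le> a + (q a - \<epsilon>) / c + 1 / (\<alpha> * c) * ln (q a / \<epsilon>) \<and> q s \<le> \<epsilon>"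
proof (rule ccontr)
  define T where "T = a + (q a - \<epsilon>) / c + 1 / (\<alpha> * c) * ln (q a / \<epsilon>)"
  assume "\<not> ?thesis"
  hence above: "\<And>s. a \<le> s \<Longrightarrow> s \<le> T \<Longrightarrow> q s > \<epsilon>" by (force simp: T_def)
  have "ln (q a / \<epsilon>) \<ge> 0" using assms(3,4) by simp
  hence "a \<le> T" using assms(1-4) by (simp add: T_def)
  have pos: "q s > 0" if "a \<le> s" "s \<le> T" for s
    using above[OF that] assms(3) by simp
  have "ln (exp (\<alpha> * q T) - 1) + \<alpha> * c * T \<le> ln (exp (\<alpha> * q a) - 1) + \<alpha> * c * a"
    using queue_lyapunov_antimono[OF assms(1) \<open>a \<le> T\<close>, of q q' c] deriv pos decay by blast
  moreover have "\<alpha> * c * (T - a) = \<alpha> * (q a - \<epsilon>) + ln (q a / \<epsilon>)"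
    using assms(1,2) by (simp add: T_def field_simps)
  ultimately have "ln (exp (\<alpha> * q T) - 1) \<le> ln (exp (\<alpha> * \<epsilon>) - 1)"
    using ln_exp_minus_one_diff_le[OF assms(1,3,4)] by (simp add: algebra_simps)
  moreover have "q T > \<epsilon>" using above[OF \<open>a \<le> T\<close>] by simp
  ultimately show False using assms(1,3) by (simp add: ln_le_cancel_iff)
qed

lemma emptying_time_le:
  assumes "tX \<le> s" "q s \<le> \<epsilon>"
  shows "emptying_time q tX \<epsilon> \<le> s"
  unfolding emptying_time_def
  by (rule cInf_lower) (use assms in \<open>auto intro: bdd_belowI[of _ tX]\<close>)

theorem mainTheorem4:
  fixes t0 q0 \<mu> \<alpha> tX Xinf \<epsilon> :: real and X q :: "real \<Rightarrow> real"
  assumes "q0 \<ge> 0" and "\<mu> > 0" and "\<alpha> > 0"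
    and "continuous_on {t0..} X" and "\<And>t. t \<ge> t0 \<Longrightarrow> X t \<ge> 0"
    and "\<And>t. t \<ge> t0 \<Longrightarrow>
          (q has_real_derivative
             (X t - (\<mu> + exp (- \<alpha> * q t) * (min \<mu> (X t) - \<mu>)))) (at t within {t0..})"
    and "q t0 = q0"
    and "tX > t0" and "Xinf < \<mu>" and "\<And>t. t \<ge> tX \<Longrightarrow> X t \<le> Xinf"
    and "q tX > 0"
    and "0 < \<epsilon>" and "\<epsilon> \<le> q tX"
  shows "emptying_time q tX \<epsilon> \<le>
           tX + (q tX - \<epsilon>) / (\<mu> - Xinf) + 1 / (\<alpha> * (\<mu> - Xinf)) * ln (q tX / \<epsilon>)"
proof -
  let ?q' = "\<lambda>t. X t - (\<mu> + exp (- \<alpha> * q t) * (min \<mu> (X t) - \<mu>))"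
  have deriv: "(q has_real_derivative ?q' s) (at s)" if "tX \<le> s" for s
  proof -
    have "s \<in> {t0<..}" using that assms(8) by simp
    moreover have "(q has_real_derivative ?q' s) (at s within {t0<..})"
      by (rule DERIV_subset[OF assms(6)]) (use calculation in auto)
    ultimately show ?thesis using at_within_open[of s "{t0<..}"] by simp
  qed
  have decay: "?q' s \<le> - (\<mu> - Xinf) * (1 - exp (- \<alpha> * q s))" if "tX \<le> s" "q s > 0" for s
  proof -
    have "X s \<le> Xinf" "1 - exp (- \<alpha> * q s) \<ge> 0" using assms(3,10) that by auto
    hence "(X s - \<mu>) * (1 - exp (- \<alpha> * q s)) \<le> - (\<mu> - Xinf) * (1 - exp (- \<alpha> * q s))"
      by (intro mult_right_mono) auto
    thus ?thesis using \<open>X s \<le> Xinf\<close> assms(9) by (simp add: min_absorb2 algebra_simps)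
  qed
  obtain s where "tX \<le> s" "q s \<le> \<epsilon>"
    and "s \<le> tX + (q tX - \<epsilon>) / (\<mu> - Xinf) + 1 / (\<alpha> * (\<mu> - Xinf)) * ln (q tX / \<epsilon>)"
    using queue_reaches_level[of \<alpha> "\<mu> - Xinf" \<epsilon> q tX ?q'] assms(3,9,12,13) deriv decay
    by auto
  thus ?thesis using emptying_time_le[of tX s q \<epsilon>] by linarith
qed

end
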